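(* Let $p\in\mathbb{N}_0$ and for $j\ge2$ let $\overline{\eta}_j=(-1)^j(2^j-2)\psi^{(j-1)}(1)$. If either $z=2\pi$ and $n\in\{0,1\}$, or $z=\pi$ and $n=0$, then $$\mathrm{Ls}_{p+n+1}^{(n)}(z)=-\int_0^z x^n\log^p\Big(2\sin\frac{x}{2}\Big)dx=\frac{(-1)^{p+1}z^{n+1}}{2^p(n+1)}\,B_p(0,\overline{\eta}_2,\overline{\eta}_3,\dots,\overline{\eta}_p).$$
   Context: $\mathrm{Ls}_{N}^{(n)}(\theta)=-\int_0^\theta x^n\big(\log|2\sin(x/2)|\big)^{N-n-1}dx$. $\psi^{(n)}(z)=\frac{d^{n+1}}{dz^{n+1}}\log\Gamma(z)$ is the polygamma function. $B_n(s_1,\dots,s_n)$ denotes the complete Bell polynomial, defined by $\exp\big(\sum_{j\ge1}s_j t^j/j!\big)=\sum_{n\ge0}B_n(s_1,\dots,s_n)t^n/n!$; $B_0=1$. *)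

theory Defs
  imports "HOL-Analysis.Analysis" "HOL-Computational_Algebra.Formal_Power_Series"
begin

definition Ls :: "nat \<Rightarrow> nat \<Rightarrow> real \<Rightarrow> real" where
  "Ls N n \<theta> = - (LBINT x=0..\<theta>. x ^ n * (ln \<bar>2 * sin (x / 2)\<bar>) ^ (N - n - 1))"

text \<open>Complete Bell polynomial B_n(s_1,...,s_n), defined through its exponential
  generating function exp(sum_{j>=1} s_j t^j / j!) = sum_n B_n t^n / n!.
  Only s 1, ..., s n are relevant; s 0 is ignored.\<close>
definition bell_gf_arg :: "(nat \<Rightarrow> real) \<Rightarrow> real fps" where
  "bell_gf_arg s = Abs_fps (\<lambda>j. if j = 0 then 0 else s j / fact j)"

definition complete_bell :: "nat \<Rightarrow> (nat \<Rightarrow> real) \<Rightarrow> real" where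
  "complete_bell n s = fact n * fps_nth (fps_exp 1 oo bell_gf_arg s) n"

definition eta_bar :: "nat \<Rightarrow> real" where
  "eta_bar j = (-1) ^ j * (2 ^ j - 2) * Polygamma (j - 1) (1::real)"

end

theory Submission
  imports Defs "HOL-Complex_Analysis.Complex_Analysis"
begin

text \<open>Write \<open>L(x) = ln (2 sin (x/2))\<close>, the logarithm of the chord \<open>|1 - e^(ix)|\<close>. Substituting
  \<open>x = 2 arcsin (sqrt u)\<close> turns its moment generating function on \<open>(0, pi)\<close> into a Beta integral,
  and Legendre duplication gives \<open>int_0^pi exp (t L(x)) dx = pi Gamma(1 + t) / Gamma(1 + t/2)^2\<close>.
  The Taylor coefficients of \<open>ln Gamma (1 + t) - 2 ln Gamma (1 + t/2)\<close> are
  \<open>psi^(j-1)(1) (1 - 2^(1-j)) / j! = (-1/2)^j eta_bar_j / j!\<close>, so by the definition of the complete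
  Bell polynomials the moments \<open>int_0^pi L^p\<close> are \<open>pi (-1/2)^p B_p(0, eta_bar_2, ...)\<close>. Both sides
  are compared as power series in \<open>t\<close> by analytic continuation from real \<open>t\<close>. The integrals over
  \<open>(0, 2 pi)\<close> reduce to \<open>(0, pi)\<close> by the symmetry \<open>L(2 pi - x) = L(x)\<close>.\<close>

section \<open>The moment generating function of the log-chord\<close>

definition log_chord :: "real \<Rightarrow> real" where
  "log_chord x = ln (2 * sin (x / 2))"

lemma log_chord_measurable [measurable]: "log_chord \<in> borel_measurable borel"
  unfolding log_chord_def by measurable

lemma chord_pos: "0 < x \<Longrightarrow> x < 2 * pi \<Longrightarrow> 0 < 2 * sin (x / 2)"
  by (auto intro!: sin_gt_zero)

lemma log_chord_reflect: "log_chord (2 * pi - x) = log_chord x"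
proof -
  have "sin ((2 * pi - x) / 2) = sin (pi - x / 2)" by (simp add: field_simps)
  thus ?thesis by (simp add: log_chord_def)
qed

lemma set_integral_Beta:
  fixes a b :: real assumes "a > 0" "b > 0"
  shows "set_integrable lborel {0<..<1} (\<lambda>u. u powr (a - 1) * (1 - u) powr (b - 1))"
    "(LBINT u:{0<..<1}. u powr (a - 1) * (1 - u) powr (b - 1)) = Beta a b"
proof -
  let ?B = "\<lambda>u::real. u powr (a - 1) * (1 - u) powr (b - 1)"
  have int: "set_integrable lborel {0..1} ?B" using assms by (rule integrable_Beta)
  show "set_integrable lborel {0<..<1} ?B"
    by (rule set_integrable_subset[OF int]) auto
  have "(LBINT u:{0<..<1}. ?B u) = (LBINT u:{0..1}. ?B u)"
    using interval_integral_Icc[of 0 1 ?B] interval_integral_Ioo[of "ereal 0" "ereal 1" ?B] by simp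
  also have "\<dots> = Beta a b"
    using set_borel_integral_eq_integral(2)[OF int] has_integral_Beta_real[OF assms]
    by (simp add: integral_unique)
  finally show "(LBINT u:{0<..<1}. ?B u) = Beta a b" .
qed

lemma has_real_derivative_two_arcsin_sqrt:
  fixes u :: real assumes "0 < u" "u < 1"
  shows "((\<lambda>u. 2 * arcsin (sqrt u)) has_real_derivative 1 / (sqrt u * sqrt (1 - u))) (at u)"
proof -
  have "-1 < sqrt u" "sqrt u < 1" using assms by (auto intro: order.strict_trans2[of _ 0])
  hence "((\<lambda>u. 2 * arcsin (sqrt u)) has_real_derivative
      2 * (inverse (sqrt (1 - (sqrt u)^2)) * (inverse (sqrt u) / 2))) (at u)"
    using assms by (auto intro!: derivative_eq_intros)
  moreover have "2 * (inverse (sqrt (1 - (sqrt u)^2)) * (inverse (sqrt u) / 2))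
      = 1 / (sqrt u * sqrt (1 - u))"
    using assms by (simp add: field_simps real_sqrt_mult)
  ultimately show ?thesis by simp
qed

lemma tendsto_two_arcsin_sqrt:
  defines "g \<equiv> \<lambda>u::real. 2 * arcsin (sqrt u)"
  shows "((ereal \<circ> g \<circ> real_of_ereal) \<longlongrightarrow> ereal 0) (at_right (ereal 0))"
    "((ereal \<circ> g \<circ> real_of_ereal) \<longlongrightarrow> ereal pi) (at_left (ereal 1))"
proof -
  have "continuous_on {0..1} g"
    unfolding g_def by (intro continuous_intros) (auto intro: order.trans[of _ 0])
  hence "(g \<longlongrightarrow> g 0) (at 0 within {0..1})" "(g \<longlongrightarrow> g 1) (at 1 within {0..1})"
    unfolding continuous_on_def by simp_all
  thus "((ereal \<circ> g \<circ> real_of_ereal) \<longlongrightarrow> ereal 0) (at_right (ereal 0))"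
    "((ereal \<circ> g \<circ> real_of_ereal) \<longlongrightarrow> ereal pi) (at_left (ereal 1))"
    unfolding ereal_tendsto_simps at_within_Icc_at_right[of 0 1, symmetric, OF zero_less_one]
      at_within_Icc_at_left[of 0 1, symmetric, OF zero_less_one]
    by (simp_all add: g_def)
qed

lemma chord_powr_arcsin_subst:
  fixes t u :: real assumes u: "0 < u" "u < 1"
  shows "(2 * sin (2 * arcsin (sqrt u) / 2)) powr t * (1 / (sqrt u * sqrt (1 - u)))
       = 2 powr t * (u powr ((t + 1) / 2 - 1) * (1 - u) powr (1 / 2 - 1))"
proof -
  have "sin (arcsin (sqrt u)) = sqrt u"
    by (rule sin_arcsin) (use u in \<open>auto intro: order.trans[of _ 0]\<close>)
  hence "(2 * sin (2 * arcsin (sqrt u) / 2)) powr t = 2 powr t * u powr (t / 2)"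
    using u by (simp add: powr_mult powr_half_sqrt[symmetric] powr_powr)
  moreover have "1 / (sqrt u * sqrt (1 - u)) = u powr (-(1/2)) * (1 - u) powr (-(1/2))"
    using u by (simp add: powr_half_sqrt powr_minus_divide)
  moreover have "u powr (t / 2) * u powr (-(1/2)) = u powr ((t + 1) / 2 - 1)"
    using u by (simp add: powr_add[symmetric] field_simps)
  ultimately show ?thesis by (simp add: mult_ac)
qed

lemma set_integral_chord_powr_Beta:
  fixes t :: real assumes t: "t > -1"
  shows "set_integrable lborel {0<..<pi} (\<lambda>x. (2 * sin (x / 2)) powr t)"
    "(LBINT x:{0<..<pi}. (2 * sin (x / 2)) powr t) = 2 powr t * Beta ((t + 1) / 2) (1 / 2)"
proof -
  define f where "f = (\<lambda>x::real. (2 * sin (x / 2)) powr t)"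
  define g where "g = (\<lambda>u::real. 2 * arcsin (sqrt u))"
  define g' where "g' = (\<lambda>u::real. 1 / (sqrt u * sqrt (1 - u)))"
  define B where "B = (\<lambda>u::real. u powr ((t + 1) / 2 - 1) * (1 - u) powr (1 / 2 - 1))"
  have fg: "f (g u) * g' u = 2 powr t * B u" if "u \<in> {0<..<1}" for u
    using chord_powr_arcsin_subst[of u t] that by (simp add: f_def g_def g'_def B_def)
  have iB: "set_integrable lborel {0<..<1} (\<lambda>u. 2 powr t * B u)"
    unfolding B_def using t by (intro set_integrable_mult_right set_integral_Beta) auto
  have cont_f: "isCont f (g u)" if "0 < u" "u < 1" for u
  proof -
    have "0 < arcsin (sqrt u)" "arcsin (sqrt u) < pi / 2"
      using that arcsin_less_arcsin[of 0 "sqrt u"] arcsin_less_arcsin[of "sqrt u" 1]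
        order.trans[OF _ real_sqrt_ge_zero, of "-1" u] by auto
    hence "sin (2 * arcsin (sqrt u) / 2) > 0" by (intro sin_gt_zero) auto
    thus ?thesis unfolding f_def g_def by (auto intro!: continuous_intros)
  qed
  have ifg: "set_integrable lborel (einterval (ereal 0) (ereal 1)) (\<lambda>u. f (g u) * g' u)"
    unfolding einterval_eq_Icc using iB by (subst set_integrable_cong[OF refl refl fg]) auto
  have deriv_g: "(g has_real_derivative g' u) (at u)" if "0 < u" "u < 1" for u
    unfolding g_def g'_def using that by (rule has_real_derivative_two_arcsin_sqrt)
  have cont_g': "isCont g' u" if "0 < u" "u < 1" for u
    unfolding g'_def using that by (auto intro!: continuous_intros)
  have S: "set_integrable lborel (einterval (ereal 0) (ereal pi)) f"
    "(LBINT x=ereal 0..ereal pi. f x) = (LBINT x=ereal 0..ereal 1. f (g x) * g' x)"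
    by (rule interval_integral_substitution_nonneg[of "ereal 0" "ereal 1" g g' f];
        use deriv_g cont_f cont_g' tendsto_two_arcsin_sqrt[folded g_def] ifg in \<open>simp add: f_def g'_def\<close>)+
  show "set_integrable lborel {0<..<pi} (\<lambda>x. (2 * sin (x / 2)) powr t)"
    using S(1) by (simp add: einterval_eq_Icc f_def)
  have "(LBINT x:{0<..<pi}. f x) = (LBINT u:{0<..<1}. f (g u) * g' u)"
    using S(2) by (simp add: interval_integral_Ioo interval_lebesgue_integral_def einterval_eq_Icc)
  also have "\<dots> = (LBINT u:{0<..<1}. 2 powr t * B u)"
    by (rule set_lebesgue_integral_cong) (auto simp: fg)
  also have "\<dots> = 2 powr t * Beta ((t + 1) / 2) (1 / 2)"
    unfolding B_def using t set_integral_Beta(2)[of "(t + 1) / 2" "1 / 2"] by simp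
  finally show "(LBINT x:{0<..<pi}. (2 * sin (x / 2)) powr t) = 2 powr t * Beta ((t + 1) / 2) (1 / 2)"
    by (simp add: f_def)
qed

lemma powr_Beta_half_eq_Gamma:
  fixes t :: real assumes t: "t > -1"
  shows "2 powr t * Beta ((t + 1) / 2) (1 / 2) = pi * Gamma (1 + t) / Gamma (1 + t / 2)^2"
proof -
  define a where "a = (t + 1) / 2"
  have a: "a > 0" using t by (simp add: a_def)
  have "complex_of_real (Gamma a) * complex_of_real (Gamma (a + 1/2)) =
        exp ((1 - 2 * complex_of_real a) * of_real (ln 2)) * of_real (sqrt pi)
          * complex_of_real (Gamma (2 * a))"
  proof -
    have "complex_of_real a \<notin> \<int>\<^sub>\<le>\<^sub>0" "complex_of_real a + 1/2 \<notin> \<int>\<^sub>\<le>\<^sub>0"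
      using a by (auto elim!: nonpos_Ints_cases simp: complex_eq_iff)
    from Gamma_legendre_duplication[OF this] show ?thesis
      by (simp add: Gamma_complex_of_real[symmetric])
  qed
  also have "exp ((1 - 2 * complex_of_real a) * of_real (ln 2)) = of_real (exp ((1 - 2 * a) * ln 2))"
    by (simp flip: exp_of_real)
  also have "exp ((1 - 2 * a) * ln 2) = 2 powr (-t)"
    by (simp add: a_def powr_def algebra_simps)
  finally have "Gamma a * Gamma (a + 1/2) = 2 powr (-t) * sqrt pi * Gamma (2 * a)"
    by (simp flip: of_real_mult)
  moreover have "a + 1/2 = 1 + t / 2" "2 * a = 1 + t" by (simp_all add: a_def field_simps)
  ultimately have dup: "Gamma a * Gamma (1 + t / 2) = 2 powr (-t) * sqrt pi * Gamma (1 + t)"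
    by simp
  have "Gamma (1 + t / 2) > 0" using t by (intro Gamma_real_pos) simp
  hence Ga: "Gamma a = 2 powr (-t) * sqrt pi * Gamma (1 + t) / Gamma (1 + t / 2)"
    using dup by (simp add: field_simps)
  have "2 powr t * Beta a (1 / 2) = 2 powr t * (Gamma a * sqrt pi / Gamma (1 + t / 2))"
    by (simp add: Beta_def Gamma_one_half_real a_def field_simps)
  also have "\<dots> = (2 powr t * 2 powr (-t)) * (sqrt pi * sqrt pi) * Gamma (1 + t) / Gamma (1 + t / 2)^2"
    unfolding Ga by (simp add: power2_eq_square)
  also have "\<dots> = pi * Gamma (1 + t) / Gamma (1 + t / 2)^2"
    by (simp add: powr_add[symmetric])
  finally show ?thesis by (simp add: a_def)
qed

lemma set_integral_chord_powr:
  fixes t :: real assumes "t > -1"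
  shows "(LBINT x:{0<..<pi}. (2 * sin (x / 2)) powr t) = pi * Gamma (1 + t) / Gamma (1 + t / 2)^2"
  using assms by (simp add: set_integral_chord_powr_Beta powr_Beta_half_eq_Gamma)

lemma exp_mult_abs_le: "exp (r * \<bar>y\<bar>) \<le> exp (r * y) + exp (-(r * y))" for r y :: real
  by (cases "y \<ge> 0") (auto simp: add_increasing add_increasing2)

lemma set_integrable_exp_abs_log_chord:
  fixes r :: real assumes r: "0 \<le> r" "r < 1"
  shows "set_integrable lborel {0<..<pi} (\<lambda>x. exp (r * \<bar>log_chord x\<bar>))"
proof (rule set_integrable_bound)
  show "set_integrable lborel {0<..<pi} (\<lambda>x. (2 * sin (x / 2)) powr r + (2 * sin (x / 2)) powr (-r))"
    using r by (intro set_integral_add set_integral_chord_powr_Beta) auto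
  show "set_borel_measurable lborel {0<..<pi} (\<lambda>x. exp (r * \<bar>log_chord x\<bar>))"
    unfolding set_borel_measurable_def by measurable
  show "AE x in lborel. x \<in> {0<..<pi} \<longrightarrow> norm (exp (r * \<bar>log_chord x\<bar>))
      \<le> norm ((2 * sin (x / 2)) powr r + (2 * sin (x / 2)) powr (-r))"
  proof (intro AE_I2 impI)
    fix x :: real assume "x \<in> {0<..<pi}"
    hence "2 * sin (x / 2) > 0" by (intro chord_pos) auto
    thus "norm (exp (r * \<bar>log_chord x\<bar>))
        \<le> norm ((2 * sin (x / 2)) powr r + (2 * sin (x / 2)) powr (-r))"
      using exp_mult_abs_le[of r "log_chord x"] by (simp add: log_chord_def powr_def mult_ac)
  qed
qed

lemma sum_power_fact_le_exp:
  fixes y :: real assumes "y \<ge> 0" "finite A"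
  shows "(\<Sum>i\<in>A. y ^ i / fact i) \<le> exp y"
proof -
  have "(\<Sum>i\<in>A. y ^ i /\<^sub>R fact i) \<le> (\<Sum>i. y ^ i /\<^sub>R fact i)"
    using assms by (intro sum_le_suminf summable_exp_generic) auto
  thus ?thesis by (simp add: exp_def divide_inverse mult_ac)
qed

lemma set_integrable_log_chord_power: "set_integrable lborel {0<..<pi} (\<lambda>x. log_chord x ^ p)"
proof (rule set_integrable_bound)
  show "set_integrable lborel {0<..<pi} (\<lambda>x. fact p * 2 ^ p * exp ((1 / 2) * \<bar>log_chord x\<bar>))"
    using set_integrable_exp_abs_log_chord[of "1 / 2"] by (intro set_integrable_mult_right) auto
  show "set_borel_measurable lborel {0<..<pi} (\<lambda>x. log_chord x ^ p)"
    unfolding set_borel_measurable_def by measurable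
  show "AE x in lborel. x \<in> {0<..<pi}
      \<longrightarrow> norm (log_chord x ^ p) \<le> norm (fact p * 2 ^ p * exp ((1 / 2) * \<bar>log_chord x\<bar>))"
  proof (intro AE_I2 impI)
    fix x
    have "(\<bar>log_chord x\<bar> / 2) ^ p / fact p \<le> exp (\<bar>log_chord x\<bar> / 2)"
      using sum_power_fact_le_exp[of "\<bar>log_chord x\<bar> / 2" "{p}"] by simp
    thus "norm (log_chord x ^ p) \<le> norm (fact p * 2 ^ p * exp ((1 / 2) * \<bar>log_chord x\<bar>))"
      by (simp add: power_abs power_divide field_simps)
  qed
qed

lemma set_integrable_mult_log_chord_power:
  "set_integrable lborel {0<..<pi} (\<lambda>x. x * log_chord x ^ p)"
proof (rule set_integrable_bound)
  show "set_integrable lborel {0<..<pi} (\<lambda>x. pi * log_chord x ^ p)"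
    by (intro set_integrable_mult_right set_integrable_log_chord_power)
  show "set_borel_measurable lborel {0<..<pi} (\<lambda>x. x * log_chord x ^ p)"
    unfolding set_borel_measurable_def by measurable
  show "AE x in lborel. x \<in> {0<..<pi} \<longrightarrow> norm (x * log_chord x ^ p) \<le> norm (pi * log_chord x ^ p)"
    by (intro AE_I2 impI) (auto simp: abs_mult intro!: mult_right_mono)
qed

section \<open>Moments and their exponential generating function\<close>

lemma summable_integral_nonneg_bounded:
  fixes u :: "nat \<Rightarrow> 'a \<Rightarrow> real"
  assumes "\<And>p. integrable M (u p)" "\<And>p x. 0 \<le> u p x" "integrable M h"
    and "\<And>n x. (\<Sum>p<n. u p x) \<le> h x"
  shows "summable (\<lambda>p. \<integral>x. u p x \<partial>M)"
proof (rule summableI_nonneg_bounded)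
  show "0 \<le> (\<integral>x. u p x \<partial>M)" for p using assms(2) by simp
  show "(\<Sum>p<n. \<integral>x. u p x \<partial>M) \<le> (\<integral>x. h x \<partial>M)" for n
  proof -
    have "(\<Sum>p<n. \<integral>x. u p x \<partial>M) = (\<integral>x. (\<Sum>p<n. u p x) \<partial>M)"
      using assms(1) by (rule Bochner_Integration.integral_sum[symmetric])
    also have "\<dots> \<le> (\<integral>x. h x \<partial>M)"
      using assms by (intro integral_mono Bochner_Integration.integrable_sum) auto
    finally show ?thesis .
  qed
qed

lemma sums_set_integral_exp_moments:
  fixes f :: "'a \<Rightarrow> real" and t :: real
  assumes [measurable]: "f \<in> borel_measurable M" "A \<in> sets M"
    and moments: "\<And>p. set_integrable M A (\<lambda>x. f x ^ p)"
    and exp_int: "set_integrable M A (\<lambda>x. exp (\<bar>t\<bar> * \<bar>f x\<bar>))"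
  shows "(\<lambda>p. (LINT x:A|M. f x ^ p) / fact p * t ^ p) sums (LINT x:A|M. exp (t * f x))"
    "summable (\<lambda>p. \<bar>LINT x:A|M. f x ^ p\<bar> / fact p * \<bar>t\<bar> ^ p)"
proof -
  define F where "F = (\<lambda>p x. indicator A x *\<^sub>R (t ^ p / fact p * f x ^ p))"
  have F_int: "integrable M (F p)" for p
    using set_integrable_mult_right[OF moments[of p], of "t ^ p / fact p"]
    unfolding set_integrable_def F_def .
  have norm_F: "norm (F p x) = indicator A x * (\<bar>t * f x\<bar> ^ p / fact p)" for p x
    by (simp add: F_def abs_mult power_abs power_mult_distrib indicator_def)
  have summable_F: "AE x in M. summable (\<lambda>p. norm (F p x))"
  proof (intro AE_I2)
    fix x
    have "summable (\<lambda>p. \<bar>t * f x\<bar> ^ p /\<^sub>R fact p)" by (rule summable_exp_generic)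
    thus "summable (\<lambda>p. norm (F p x))"
      unfolding norm_F by (intro summable_mult) (simp add: divide_inverse mult_ac)
  qed
  have summable_int_F: "summable (\<lambda>p. \<integral>x. norm (F p x) \<partial>M)"
  proof (rule summable_integral_nonneg_bounded)
    show "integrable M (\<lambda>x. indicator A x *\<^sub>R exp (\<bar>t\<bar> * \<bar>f x\<bar>))"
      using exp_int unfolding set_integrable_def .
    fix n x
    have "(\<Sum>p<n. norm (F p x)) = indicator A x * (\<Sum>p<n. \<bar>t * f x\<bar> ^ p / fact p)"
      by (simp only: norm_F sum_distrib_left)
    also have "\<dots> \<le> indicator A x * exp (\<bar>t * f x\<bar>)"
      by (intro mult_left_mono sum_power_fact_le_exp) auto
    finally show "(\<Sum>p<n. norm (F p x)) \<le> indicator A x *\<^sub>R exp (\<bar>t\<bar> * \<bar>f x\<bar>)"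
      by (simp add: abs_mult)
  qed (simp_all add: F_int)
  have int_F: "integral\<^sup>L M (F p) = (LINT x:A|M. f x ^ p) / fact p * t ^ p" for p
    unfolding F_def set_lebesgue_integral_def[symmetric] by simp
  have sum_F: "(\<Sum>p. F p x) = indicator A x *\<^sub>R exp (t * f x)" for x
  proof -
    have "(\<lambda>p. (t * f x) ^ p /\<^sub>R fact p) sums exp (t * f x)" by (rule exp_converges)
    hence "(\<lambda>p. F p x) sums (indicator A x *\<^sub>R exp (t * f x))"
      unfolding F_def by (intro sums_scaleR_right) (simp add: power_mult_distrib field_simps)
    thus ?thesis by (simp add: sums_iff)
  qed
  show "(\<lambda>p. (LINT x:A|M. f x ^ p) / fact p * t ^ p) sums (LINT x:A|M. exp (t * f x))"
    using sums_integral[OF F_int summable_F summable_int_F]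
    by (simp add: int_F sum_F set_lebesgue_integral_def)
  have "\<bar>LINT x:A|M. f x ^ p\<bar> / fact p * \<bar>t\<bar> ^ p \<le> (\<integral>x. norm (F p x) \<partial>M)" for p
    using integral_norm_bound[of M "F p"] by (simp add: int_F abs_mult power_abs)
  thus "summable (\<lambda>p. \<bar>LINT x:A|M. f x ^ p\<bar> / fact p * \<bar>t\<bar> ^ p)"
    by (intro summable_comparison_test[OF _ summable_int_F] exI[of _ 0]) auto
qed

definition log_sine_moment :: "nat \<Rightarrow> real" where
  "log_sine_moment p = (LBINT x:{0<..<pi}. log_chord x ^ p)"

lemma log_sine_moment_series:
  fixes t :: real assumes t: "\<bar>t\<bar> < 1"
  shows "(\<lambda>p. log_sine_moment p / fact p * t ^ p) sums (pi * Gamma (1 + t) / Gamma (1 + t / 2)^2)"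
    "summable (\<lambda>p. \<bar>log_sine_moment p\<bar> / fact p * \<bar>t\<bar> ^ p)"
proof -
  have "log_chord \<in> borel_measurable lborel" by measurable
  note series = sums_set_integral_exp_moments[OF this _ set_integrable_log_chord_power
      set_integrable_exp_abs_log_chord[of "\<bar>t\<bar>"]]
  have "(LBINT x:{0<..<pi}. exp (t * log_chord x)) = (LBINT x:{0<..<pi}. (2 * sin (x / 2)) powr t)"
    by (rule set_lebesgue_integral_cong)
       (use chord_pos in \<open>fastforce simp: log_chord_def powr_def\<close>)+
  also have "\<dots> = pi * Gamma (1 + t) / Gamma (1 + t / 2)^2"
    using t by (intro set_integral_chord_powr) auto
  finally show "(\<lambda>p. log_sine_moment p / fact p * t ^ p) sums (pi * Gamma (1 + t) / Gamma (1 + t / 2)^2)"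
    using series(1) t by (simp add: log_sine_moment_def)
  show "summable (\<lambda>p. \<bar>log_sine_moment p\<bar> / fact p * \<bar>t\<bar> ^ p)"
    using series(2) t by (simp add: log_sine_moment_def)
qed

section \<open>The Taylor series of the Gamma quotient\<close>

definition fps_of_real :: "real fps \<Rightarrow> complex fps" where
  "fps_of_real F = Abs_fps (\<lambda>n. complex_of_real (fps_nth F n))"

lemma fps_of_real_nth [simp]: "fps_nth (fps_of_real F) n = complex_of_real (fps_nth F n)"
  by (simp add: fps_of_real_def)

lemma fps_of_real_mult: "fps_of_real (F * G) = fps_of_real F * fps_of_real G"
  by (simp add: fps_eq_iff fps_mult_nth)

lemma fps_of_real_power: "fps_of_real (F ^ n) = fps_of_real F ^ n"
proof (induction n)
  case 0 show ?case by (simp add: fps_eq_iff)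
next
  case Suc thus ?case by (simp add: fps_of_real_mult)
qed

lemma fps_of_real_compose: "fps_of_real (F oo G) = fps_of_real F oo fps_of_real G"
  by (simp add: fps_eq_iff fps_compose_nth fps_of_real_power[symmetric])

lemma fps_of_real_exp: "fps_of_real (fps_exp 1) = fps_exp 1"
  by (simp add: fps_eq_iff)

lemma complete_bell_cong:
  "(\<And>j. j \<ge> 1 \<Longrightarrow> s j = s' j) \<Longrightarrow> complete_bell n s = complete_bell n s'"
  unfolding complete_bell_def bell_gf_arg_def by (simp cong: if_cong)

lemma complete_bell_scale: "complete_bell n (\<lambda>j. c ^ j * s j) = c ^ n * complete_bell n s"
proof -
  have "bell_gf_arg (\<lambda>j. c ^ j * s j) = bell_gf_arg s oo (fps_const c * fps_X)"
    by (simp add: fps_compose_linear fps_eq_iff bell_gf_arg_def)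
  hence "fps_exp 1 oo bell_gf_arg (\<lambda>j. c ^ j * s j)
      = (fps_exp 1 oo bell_gf_arg s) oo (fps_const c * fps_X)"
    by (simp add: fps_compose_assoc bell_gf_arg_def)
  thus ?thesis by (simp add: complete_bell_def fps_compose_linear)
qed

definition log_chord_cumulant :: "nat \<Rightarrow> real" where
  "log_chord_cumulant j = Polygamma (j - 1) 1 * (1 - 2 / 2 ^ j)"

lemma log_chord_cumulant_eq_eta_bar:
  assumes "j \<ge> 1"
  shows "log_chord_cumulant j = (-1/2) ^ j * (if j \<le> 1 then 0 else eta_bar j)"
proof (cases "j = 1")
  case False
  have "(-1/2::real) ^ j * (-1) ^ j = (1/2) ^ j" by (simp add: power_mult_distrib[symmetric])
  hence "(-1/2::real) ^ j * eta_bar j = (1/2) ^ j * (2 ^ j - 2) * Polygamma (j - 1) 1"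
    by (simp add: eta_bar_def mult.assoc[symmetric])
  also have "\<dots> = log_chord_cumulant j"
    by (simp add: log_chord_cumulant_def field_simps power_one_over)
  finally show ?thesis using False assms by simp
qed (simp add: log_chord_cumulant_def)

lemma complete_bell_log_chord_cumulant:
  "complete_bell n log_chord_cumulant
     = (-1/2) ^ n * complete_bell n (\<lambda>j. if j \<le> 1 then 0 else eta_bar j)"
  by (simp add: complete_bell_scale[symmetric] log_chord_cumulant_eq_eta_bar cong: complete_bell_cong)

lemma one_plus_notin_nonpos_Reals: "norm (w :: complex) < 1 \<Longrightarrow> 1 + w \<notin> \<real>\<^sub>\<le>\<^sub>0"
  using abs_Re_le_cmod[of w] by (auto simp: complex_nonpos_Reals_iff)

lemma has_fps_expansion_ln_Gamma_1:
  "(\<lambda>w. ln_Gamma (1 + w)) has_fps_expansion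
     Abs_fps (\<lambda>n. if n = 0 then 0 else complex_of_real (Polygamma (n - 1) 1) / fact n)"
proof -
  have not_pole: "(1::complex) \<notin> \<real>\<^sub>\<le>\<^sub>0" using one_plus_notin_nonpos_Reals[of 0] by simp
  hence "(\<lambda>w. ln_Gamma (1 + w)) has_fps_expansion fps_expansion ln_Gamma (1::complex)"
    by (intro analytic_at_imp_has_fps_expansion analytic_ln_Gamma) auto
  also have "fps_expansion ln_Gamma (1::complex)
      = Abs_fps (\<lambda>n. if n = 0 then 0 else complex_of_real (Polygamma (n - 1) 1) / fact n)"
    using higher_deriv_ln_Gamma_complex[OF not_pole] ln_Gamma_complex_of_real[of 1]
      ln_Gamma_real_pos[of 1] Polygamma_of_real[where 'a=complex, of 1]
    by (simp add: fps_eq_iff fps_expansion_def)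
  finally show ?thesis .
qed

lemma has_fps_expansion_ln_Gamma_ratio:
  "(\<lambda>w. ln_Gamma (1 + w) - 2 * ln_Gamma (1 + w / 2)) has_fps_expansion
     fps_of_real (bell_gf_arg log_chord_cumulant)"
proof -
  define L :: "complex fps"
    where "L = Abs_fps (\<lambda>n. if n = 0 then 0 else of_real (Polygamma (n - 1) 1) / fact n)"
  have "(\<lambda>w. ln_Gamma (1 + w / 2)) has_fps_expansion (L oo (fps_const (1/2) * fps_X))"
    using has_fps_expansion_compose[OF has_fps_expansion_ln_Gamma_1
        has_fps_expansion_cmult_left[OF has_fps_expansion_fps_X, of "1/2"]]
    by (simp add: o_def L_def)
  hence "(\<lambda>w. ln_Gamma (1 + w) - 2 * ln_Gamma (1 + w / 2)) has_fps_expansion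
      (L - fps_const 2 * (L oo (fps_const (1/2) * fps_X)))"
    unfolding L_def by (intro has_fps_expansion_diff has_fps_expansion_ln_Gamma_1
        has_fps_expansion_cmult_left)
  also have "L - fps_const 2 * (L oo (fps_const (1/2) * fps_X))
      = fps_of_real (bell_gf_arg log_chord_cumulant)"
  proof (rule fps_ext)
    fix n
    have "fps_nth (L oo (fps_const (1/2) * fps_X)) n = (1/2) ^ n * fps_nth L n"
      by (subst fps_compose_linear) simp
    thus "fps_nth (L - fps_const 2 * (L oo (fps_const (1/2) * fps_X))) n
        = fps_nth (fps_of_real (bell_gf_arg log_chord_cumulant)) n"
      by (simp add: L_def bell_gf_arg_def log_chord_cumulant_def power_one_over field_simps)
  qed
  finally show ?thesis .
qed

text \<open>On the unit disc \<open>chord_mgf w = Gamma (1 + w) / Gamma (1 + w / 2)^2\<close>; the logarithmic form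
  makes its Taylor series the exponential of a series with explicit coefficients.\<close>
definition chord_mgf :: "complex \<Rightarrow> complex" where
  "chord_mgf w = exp (ln_Gamma (1 + w) - 2 * ln_Gamma (1 + w / 2))"

lemma has_fps_expansion_chord_mgf:
  "chord_mgf has_fps_expansion fps_of_real (fps_exp 1 oo bell_gf_arg log_chord_cumulant)"
proof -
  have "fps_nth (fps_of_real (bell_gf_arg log_chord_cumulant)) 0 = 0"
    by (simp add: bell_gf_arg_def)
  from has_fps_expansion_compose[OF has_fps_expansion_exp1 has_fps_expansion_ln_Gamma_ratio this]
  show ?thesis
    by (simp add: o_def chord_mgf_def[abs_def] fps_of_real_compose fps_of_real_exp)
qed

lemma chord_mgf_holomorphic: "chord_mgf holomorphic_on ball 0 1"
proof -
  have ln_Gamma_holo: "(\<lambda>w. ln_Gamma (1 + w / c)) holomorphic_on ball 0 1"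
    if c: "norm c \<ge> 1" for c :: complex
  proof (rule holomorphic_on_compose_gen[of _ _ ln_Gamma "- \<real>\<^sub>\<le>\<^sub>0", unfolded o_def])
    have "norm (w / c) < 1" if "w \<in> ball 0 1" for w
      using that c by (simp add: norm_divide divide_less_eq)
    thus "(\<lambda>w. 1 + w / c) ` ball 0 1 \<subseteq> - \<real>\<^sub>\<le>\<^sub>0"
      using one_plus_notin_nonpos_Reals by blast
  qed (auto intro!: holomorphic_intros)
  show ?thesis
    unfolding chord_mgf_def[abs_def]
    by (intro holomorphic_on_exp' holomorphic_on_diff holomorphic_on_mult holomorphic_on_const
        ln_Gamma_holo[of 1, simplified] ln_Gamma_holo[of 2, simplified])
qed

lemma chord_mgf_of_real:
  fixes t :: real assumes "\<bar>t\<bar> < 1"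
  shows "chord_mgf (complex_of_real t) = complex_of_real (Gamma (1 + t) / Gamma (1 + t / 2)^2)"
proof -
  have pos: "1 + t > 0" "1 + t / 2 > 0" using assms by auto
  have "chord_mgf (complex_of_real t) = of_real (exp (ln_Gamma (1 + t) - 2 * ln_Gamma (1 + t / 2)))"
    using ln_Gamma_complex_of_real[OF pos(1)] ln_Gamma_complex_of_real[OF pos(2)]
    by (simp add: chord_mgf_def flip: exp_of_real)
  also have "exp (ln_Gamma (1 + t) - 2 * ln_Gamma (1 + t / 2))
      = exp (ln (Gamma (1 + t))) / exp (ln (Gamma (1 + t / 2)))^2"
    using pos by (simp only: ln_Gamma_real_pos exp_diff exp_of_nat_mult[of 2, simplified])
  also have "\<dots> = Gamma (1 + t) / Gamma (1 + t / 2)^2"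
    using pos by (simp only: Gamma_real_pos exp_ln)
  finally show ?thesis .
qed

section \<open>Moments as complete Bell polynomials\<close>

definition log_sine_egf :: "complex fps" where
  "log_sine_egf = Abs_fps (\<lambda>p. complex_of_real (log_sine_moment p / fact p))"

lemma log_sine_egf_conv_radius: "fps_conv_radius log_sine_egf \<ge> ereal (1 / 2)"
proof -
  have norm_eq: "norm (fps_nth log_sine_egf n * complex_of_real (1/2) ^ n)
      = \<bar>log_sine_moment n\<bar> / fact n * \<bar>1/2::real\<bar> ^ n" for n
    by (simp add: log_sine_egf_def norm_mult norm_power norm_divide)
  have "summable (\<lambda>n. \<bar>log_sine_moment n\<bar> / fact n * \<bar>1/2::real\<bar> ^ n)"
    by (rule log_sine_moment_series(2)) simp
  hence "summable (\<lambda>n. norm (fps_nth log_sine_egf n * complex_of_real (1/2) ^ n))"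
    by (simp only: norm_eq)
  hence "summable (\<lambda>n. fps_nth log_sine_egf n * complex_of_real (1/2) ^ n)"
    by (rule summable_norm_cancel)
  hence "conv_radius (fps_nth log_sine_egf) \<ge> norm (complex_of_real (1/2))"
    by (rule conv_radius_geI)
  thus ?thesis by (simp add: fps_conv_radius_def)
qed

lemma eval_log_sine_egf_of_real:
  fixes t :: real assumes "\<bar>t\<bar> < 1"
  shows "eval_fps log_sine_egf (complex_of_real t) = pi * chord_mgf (complex_of_real t)"
proof -
  have "(\<lambda>p. complex_of_real (log_sine_moment p / fact p * t ^ p))
      sums complex_of_real (pi * Gamma (1 + t) / Gamma (1 + t / 2)^2)"
    using log_sine_moment_series(1)[OF assms] by (subst sums_of_real_iff)
  thus ?thesis
    using chord_mgf_of_real[OF assms] by (simp add: eval_fps_def sums_iff log_sine_egf_def)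
qed

text \<open>Both sides are holomorphic near \<open>0\<close> and agree on a real segment, so they coincide.\<close>
lemma log_sine_egf_eq:
  "log_sine_egf = fps_const (complex_of_real pi) * fps_of_real (fps_exp 1 oo bell_gf_arg log_chord_cumulant)"
proof -
  define \<phi> where "\<phi> = (\<lambda>w. eval_fps log_sine_egf w - pi * chord_mgf w)"
  have "ball 0 (1/2) \<subseteq> eball (0::complex) (fps_conv_radius log_sine_egf)"
  proof
    fix w :: complex assume "w \<in> ball 0 (1/2)"
    hence "ereal (norm w) < ereal (1/2)" by simp
    thus "w \<in> eball 0 (fps_conv_radius log_sine_egf)"
      using less_le_trans[OF _ log_sine_egf_conv_radius] by simp
  qed
  hence holo: "\<phi> holomorphic_on ball 0 (1/2)"
    unfolding \<phi>_def
    by (intro holomorphic_intros holomorphic_on_subset[OF chord_mgf_holomorphic]) auto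
  define U where "U = complex_of_real ` {-1/4<..<1/4}"
  have "0 islimpt U"
  proof (rule islimpt_approachable[THEN iffD2], intro allI impI)
    fix e :: real assume "e > 0"
    hence "complex_of_real (min (e/2) (1/8)) \<in> U - {0}" "dist (complex_of_real (min (e/2) (1/8))) 0 < e"
      by (auto simp: U_def)
    thus "\<exists>x'\<in>U. x' \<noteq> 0 \<and> dist x' 0 < e" by blast
  qed
  moreover have "\<phi> z = 0" if "z \<in> U" for z
    using that eval_log_sine_egf_of_real by (auto simp: U_def \<phi>_def)
  moreover have "U \<subseteq> ball 0 (1/2)" by (auto simp: U_def)
  ultimately have "\<phi> w = 0" if "w \<in> ball 0 (1/2)" for w
    using analytic_continuation[OF holo _ _ _ _ _ _ that, of U 0] by auto
  hence "eventually (\<lambda>w. eval_fps log_sine_egf w = pi * chord_mgf w) (nhds 0)"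
    using eventually_nhds_in_open[of "ball 0 (1/2)" 0] by (auto elim!: eventually_mono simp: \<phi>_def)
  moreover have "fps_conv_radius log_sine_egf > 0"
    using log_sine_egf_conv_radius by (rule less_le_trans[rotated]) simp
  ultimately have "(\<lambda>w. pi * chord_mgf w) has_fps_expansion log_sine_egf"
    by (simp add: has_fps_expansion_def)
  thus ?thesis
    using has_fps_expansion_cmult_left[OF has_fps_expansion_chord_mgf, of "complex_of_real pi"]
    by (rule fps_expansion_unique_complex)
qed

lemma log_sine_moment_eq_complete_bell:
  "log_sine_moment p = pi * complete_bell p log_chord_cumulant"
proof -
  have "complex_of_real (log_sine_moment p / fact p)
      = complex_of_real (pi * fps_nth (fps_exp 1 oo bell_gf_arg log_chord_cumulant) p)"
    using arg_cong[OF log_sine_egf_eq, of "\<lambda>F. fps_nth F p"] by (simp add: log_sine_egf_def)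
  thus ?thesis by (simp only: of_real_eq_iff) (simp add: complete_bell_def field_simps)
qed

lemma log_sine_moment_eq:
  "log_sine_moment p = pi * (-1) ^ p / 2 ^ p * complete_bell p (\<lambda>j. if j \<le> 1 then 0 else eta_bar j)"
  unfolding log_sine_moment_eq_complete_bell complete_bell_log_chord_cumulant power_divide by simp

section \<open>Integrals over \<open>(0, 2 pi)\<close>\<close>

lemma set_integral_reflect:
  fixes h :: "real \<Rightarrow> 'b :: {banach, second_countable_topology}"
  shows "set_integrable lborel {a<..<b} h \<longleftrightarrow> set_integrable lborel {c - b<..<c - a} (\<lambda>y. h (c - y))"
    "(LBINT x:{a<..<b}. h x) = (LBINT y:{c - b<..<c - a}. h (c - y))"
proof -
  define F where "F = (\<lambda>x. indicator {a<..<b} x *\<^sub>R h x)"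
  have F_reflect: "(\<lambda>y. F (c + (-1) * y)) = (\<lambda>y. indicator {c - b<..<c - a} y *\<^sub>R h (c - y))"
    by (rule ext) (auto simp: F_def indicator_def)
  show "set_integrable lborel {a<..<b} h \<longleftrightarrow> set_integrable lborel {c - b<..<c - a} (\<lambda>y. h (c - y))"
    using lborel_integrable_real_affine_iff[of "-1" F c]
    unfolding set_integrable_def F_reflect by (simp add: F_def)
  show "(LBINT x:{a<..<b}. h x) = (LBINT y:{c - b<..<c - a}. h (c - y))"
    using lborel_integral_real_affine[of "-1" F c]
    unfolding set_lebesgue_integral_def F_reflect by (simp add: F_def)
qed

lemma set_integral_Ioo_split:
  fixes f :: "real \<Rightarrow> 'b :: {banach, second_countable_topology}"
  assumes "a < b" "b < c" and [measurable]: "f \<in> borel_measurable borel"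
    and "set_integrable lborel {a<..<b} f" "set_integrable lborel {b<..<c} f"
  shows "set_integrable lborel {a<..<c} f"
    "(LBINT x:{a<..<c}. f x) = (LBINT x:{a<..<b}. f x) + (LBINT x:{b<..<c}. f x)"
proof -
  have ae: "AE x in lborel.
      indicator ({a<..<b} \<union> {b<..<c}) x *\<^sub>R f x = indicator {a<..<c} x *\<^sub>R f x"
    using AE_lborel_singleton[of b] by eventually_elim (use assms in \<open>auto simp: indicator_def\<close>)
  have "set_integrable lborel ({a<..<b} \<union> {b<..<c}) f"
    using assms by (intro set_integrable_Un) auto
  thus "set_integrable lborel {a<..<c} f"
    unfolding set_integrable_def by (rule integrable_cong_AE_imp[OF _ _ ae]) measurable
  have "(LBINT x:{a<..<c}. f x) = (LBINT x:{a<..<b} \<union> {b<..<c}. f x)"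
    unfolding set_lebesgue_integral_def by (rule integral_cong_AE[OF _ _ ae, symmetric]) measurable
  also have "\<dots> = (LBINT x:{a<..<b}. f x) + (LBINT x:{b<..<c}. f x)"
    using assms by (intro set_integral_Un) auto
  finally show "(LBINT x:{a<..<c}. f x) = (LBINT x:{a<..<b}. f x) + (LBINT x:{b<..<c}. f x)" .
qed

lemma set_integral_log_chord_power_0_2pi:
  shows "set_integrable lborel {0<..<2 * pi} (\<lambda>x. log_chord x ^ p)"
    "(LBINT x:{0<..<2 * pi}. log_chord x ^ p) = 2 * log_sine_moment p"
proof -
  have reflect: "set_integrable lborel {pi<..<2 * pi} (\<lambda>x. log_chord x ^ p)"
      "(LBINT x:{pi<..<2 * pi}. log_chord x ^ p) = log_sine_moment p"
    using set_integral_reflect[of pi "2 * pi" "\<lambda>x. log_chord x ^ p" "2 * pi"]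
      set_integrable_log_chord_power[of p]
    by (simp_all add: log_chord_reflect log_sine_moment_def)
  show "set_integrable lborel {0<..<2 * pi} (\<lambda>x. log_chord x ^ p)"
    "(LBINT x:{0<..<2 * pi}. log_chord x ^ p) = 2 * log_sine_moment p"
    using set_integral_Ioo_split[of 0 pi "2 * pi" "\<lambda>x. log_chord x ^ p"] reflect
      set_integrable_log_chord_power[of p]
    by (simp_all add: log_sine_moment_def)
qed

lemma set_integral_mult_log_chord_power_0_2pi:
  shows "set_integrable lborel {0<..<2 * pi} (\<lambda>x. x * log_chord x ^ p)"
    "(LBINT x:{0<..<2 * pi}. x * log_chord x ^ p) = 2 * pi * log_sine_moment p"
proof -
  have "(\<lambda>y. (2 * pi - y) * log_chord (2 * pi - y) ^ p)
      = (\<lambda>y. 2 * pi * log_chord y ^ p - y * log_chord y ^ p)"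
    by (simp only: log_chord_reflect) (simp add: algebra_simps)
  hence reflect: "set_integrable lborel {pi<..<2 * pi} (\<lambda>x. x * log_chord x ^ p)"
      "(LBINT x:{pi<..<2 * pi}. x * log_chord x ^ p)
        = 2 * pi * log_sine_moment p - (LBINT x:{0<..<pi}. x * log_chord x ^ p)"
    using set_integral_reflect[of pi "2 * pi" "\<lambda>x. x * log_chord x ^ p" "2 * pi"]
      set_integrable_log_chord_power[of p] set_integrable_mult_log_chord_power[of p]
    by (simp_all add: set_integral_diff set_integrable_mult_right log_sine_moment_def)
  show "set_integrable lborel {0<..<2 * pi} (\<lambda>x. x * log_chord x ^ p)"
    "(LBINT x:{0<..<2 * pi}. x * log_chord x ^ p) = 2 * pi * log_sine_moment p"
    using set_integral_Ioo_split[of 0 pi "2 * pi" "\<lambda>x. x * log_chord x ^ p"] reflect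
      set_integrable_mult_log_chord_power[of p]
    by simp_all
qed

lemma set_integral_power_mult_log_chord_power:
  assumes "(z = 2 * pi \<and> (n = 0 \<or> n = 1)) \<or> (z = pi \<and> n = 0)"
  shows "set_integrable lborel {0<..<z} (\<lambda>x. x ^ n * log_chord x ^ p)"
    "(LBINT x:{0<..<z}. x ^ n * log_chord x ^ p) = z ^ (n + 1) / (real (n + 1) * pi) * log_sine_moment p"
  using assms set_integrable_log_chord_power[of p]
    set_integral_log_chord_power_0_2pi[of p] set_integral_mult_log_chord_power_0_2pi[of p]
  by (auto simp: log_sine_moment_def power2_eq_square)

lemma Ls_eq_set_integral_log_chord:
  assumes "0 < z" "z \<le> 2 * pi"
  shows "Ls (p + n + 1) n z = - (LBINT x:{0<..<z}. x ^ n * log_chord x ^ p)"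
proof -
  have "(LBINT x:{0<..<z}. x ^ n * (ln \<bar>2 * sin (x / 2)\<bar>) ^ p)
      = (LBINT x:{0<..<z}. x ^ n * log_chord x ^ p)"
    by (rule set_lebesgue_integral_cong)
       (use assms chord_pos in \<open>fastforce simp: log_chord_def\<close>)+
  thus ?thesis using assms by (simp add: Ls_def interval_integral_Ioo zero_ereal_def)
qed

theorem mainTheorem7:
  fixes p n :: nat and z :: real
  assumes "(z = 2 * pi \<and> (n = 0 \<or> n = 1)) \<or> (z = pi \<and> n = 0)"
  shows "interval_lebesgue_integrable lborel 0 z (\<lambda>x. x ^ n * (ln (2 * sin (x / 2))) ^ p)
    \<and> Ls (p + n + 1) n z = - (LBINT x=0..z. x ^ n * (ln (2 * sin (x / 2))) ^ p)
    \<and> - (LBINT x=0..z. x ^ n * (ln (2 * sin (x / 2))) ^ p)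
        = (-1) ^ (p + 1) * z ^ (n + 1) / (2 ^ p * real (n + 1))
          * complete_bell p (\<lambda>j. if j \<le> 1 then 0 else eta_bar j)"
proof -
  have z: "0 < z" "z \<le> 2 * pi" using assms by auto
  have integrand: "(\<lambda>x. x ^ n * (ln (2 * sin (x / 2))) ^ p) = (\<lambda>x. x ^ n * log_chord x ^ p)"
    by (simp add: log_chord_def)
  note integral = set_integral_power_mult_log_chord_power[OF assms, of p]
  have "interval_lebesgue_integrable lborel 0 z (\<lambda>x. x ^ n * log_chord x ^ p)"
    using integral(1) z by (simp add: interval_lebesgue_integrable_def einterval_eq_Icc zero_ereal_def)
  moreover have "(LBINT x=0..z. x ^ n * log_chord x ^ p) = (LBINT x:{0<..<z}. x ^ n * log_chord x ^ p)"
    using z by (simp add: interval_integral_Ioo zero_ereal_def)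
  moreover have "- (LBINT x:{0<..<z}. x ^ n * log_chord x ^ p)
      = (-1) ^ (p + 1) * z ^ (n + 1) / (2 ^ p * real (n + 1))
        * complete_bell p (\<lambda>j. if j \<le> 1 then 0 else eta_bar j)"
    unfolding integral(2) log_sine_moment_eq by (simp add: divide_simps del: of_nat_Suc of_nat_add)
  ultimately show ?thesis
    unfolding integrand using Ls_eq_set_integral_log_chord[OF z] by simp
qed

end
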